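(* Let $G$ be a finite group with subgroups $H$ and $K$, and let $\Omega_K$ be a left transversal of the normalizer $N_G(K)$ in $G$. Then the number of double cosets $HgK$ is $$|H\backslash G/K|=\sum_{l\in\Omega_K}\frac{[N_G(K):K]\cdot|lKl^{-1}\cap H|}{|H|}.$$
   Context: A left transversal of a subgroup is a set of representatives of its left cosets in $G$. *)

theory Defs
  imports Complex_Main "HOL-Algebra.Group_Action"
begin

definition double_cosets :: "('a, 'b) monoid_scheme \<Rightarrow> 'a set \<Rightarrow> 'a set \<Rightarrow> 'a set set" where
  "double_cosets G H K = {(H #>\<^bsub>G\<^esub> g) <#>\<^bsub>G\<^esub> K | g. g \<in> carrier G}"

definition left_transversal :: "('a, 'b) monoid_scheme \<Rightarrow> 'a set \<Rightarrow> 'a set \<Rightarrow> bool" where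
  "left_transversal G N \<Omega> \<longleftrightarrow> \<Omega> \<subseteq> carrier G \<and>
     (\<forall>g \<in> carrier G. \<exists>!l \<in> \<Omega>. l <#\<^bsub>G\<^esub> N = g <#\<^bsub>G\<^esub> N)"

end

theory Submission
  imports Defs "HOL-Algebra.Left_Coset"
begin

text \<open>
  The double coset H g K is a right translate of the product set H (g K g^-1), so the product
  formula for subgroups gives |H g K| |H \<inter> g K g^-1| = |H| |K|. Summing 1/|H g K| over all
  g counts every double coset exactly once, hence the number of double cosets is the sum over
  g of |H \<inter> g K g^-1| / (|H| |K|). Conjugation by elements of the normalizer N fixes K, so
  the summand is constant on each left coset l N, and grouping the sum along the transversal
  contributes the factor |N|.
\<close>

lemma card_image_eq_sum_inverse_card:
  fixes B :: "'a \<Rightarrow> 'a set"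
  assumes "finite A"
    and self_mem: "\<And>x. x \<in> A \<Longrightarrow> x \<in> B x"
    and subset: "\<And>x. x \<in> A \<Longrightarrow> B x \<subseteq> A"
    and repr: "\<And>x y. x \<in> A \<Longrightarrow> y \<in> B x \<Longrightarrow> B y = B x"
  shows "real (card (B ` A)) = (\<Sum>x\<in>A. 1 / real (card (B x)))"
proof -
  have class_sum: "(\<Sum>y\<in>{y\<in>A. B y = B x}. 1 / real (card (B y))) = 1" if "x \<in> A" for x
  proof -
    have class_eq: "{y\<in>A. B y = B x} = B x"
      using that self_mem subset repr by blast
    have "finite (B x)"
      using that subset \<open>finite A\<close> finite_subset by blast
    then have "card (B x) > 0"
      using that self_mem card_gt_0_iff by blast
    have "(\<Sum>y\<in>{y\<in>A. B y = B x}. 1 / real (card (B y))) = (\<Sum>y\<in>B x. 1 / real (card (B x)))"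
      unfolding class_eq using repr[OF that] by (intro sum.cong) auto
    also have "\<dots> = 1"
      using \<open>card (B x) > 0\<close> by simp
    finally show ?thesis .
  qed
  have "(\<Sum>x\<in>A. 1 / real (card (B x))) = (\<Sum>E\<in>B ` A. \<Sum>y\<in>{y\<in>A. B y = E}. 1 / real (card (B y)))"
    by (rule sum.group[symmetric]) (use \<open>finite A\<close> in auto)
  also have "\<dots> = (\<Sum>E\<in>B ` A. 1)"
    using class_sum by (intro sum.cong) blast+
  finally show ?thesis by simp
qed

context group begin

lemma card_r_coset:
  assumes "H \<subseteq> carrier G" "x \<in> carrier G"
  shows "card (H #> x) = card H"
  using card_rcosets_equal[OF rcosetsI[OF assms] assms(1)] by (rule sym)

lemma card_l_coset:
  assumes "H \<subseteq> carrier G" "x \<in> carrier G"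
  shows "card (x <# H) = card H"
proof -
  have "x <# H = (\<lambda>h. x \<otimes> h) ` H"
    unfolding l_coset_def by blast
  then show ?thesis
    using inj_on_g'[OF assms] by (simp add: card_image)
qed

lemma card_set_mult_fibre:
  assumes "subgroup H G" "subgroup L G" "h \<in> H" "l \<in> L"
  shows "card {p \<in> H \<times> L. fst p \<otimes> snd p = h \<otimes> l} = card (H \<inter> L)"
proof -
  have carr: "h \<in> carrier G" "l \<in> carrier G" "\<And>x. x \<in> H \<Longrightarrow> x \<in> carrier G" "\<And>x. x \<in> L \<Longrightarrow> x \<in> carrier G"
    using assms subgroup.mem_carrier by metis+
  have "{p \<in> H \<times> L. fst p \<otimes> snd p = h \<otimes> l} = (\<lambda>x. (h \<otimes> x, inv x \<otimes> l)) ` (H \<inter> L)"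
  proof (intro equalityI subsetI)
    fix p assume "p \<in> {p \<in> H \<times> L. fst p \<otimes> snd p = h \<otimes> l}"
    then obtain h' l' where p: "p = (h', l')" "h' \<in> H" "l' \<in> L" and eq: "h' \<otimes> l' = h \<otimes> l"
      by auto
    have x_eq: "inv h \<otimes> h' = l \<otimes> inv l'"
      using eq carr p by (metis inv_closed inv_solve_left inv_solve_right m_assoc m_closed)
    have "inv h \<otimes> h' \<in> H" "l \<otimes> inv l' \<in> L"
      using p assms by (simp_all add: subgroup.m_closed subgroup.m_inv_closed)
    then have x: "inv h \<otimes> h' \<in> H \<inter> L"
      unfolding x_eq[symmetric] by simp
    have "h \<otimes> (inv h \<otimes> h') = h'" "inv (l \<otimes> inv l') \<otimes> l = l'"
      using p carr by (simp_all add: m_assoc[symmetric] inv_mult_group) (simp add: m_assoc)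
    then have "p = (h \<otimes> (inv h \<otimes> h'), inv (inv h \<otimes> h') \<otimes> l)"
      unfolding x_eq p(1) by simp
    with x show "p \<in> (\<lambda>x. (h \<otimes> x, inv x \<otimes> l)) ` (H \<inter> L)"
      by blast
  next
    fix p assume "p \<in> (\<lambda>x. (h \<otimes> x, inv x \<otimes> l)) ` (H \<inter> L)"
    then obtain x where x: "x \<in> H \<inter> L" and p: "p = (h \<otimes> x, inv x \<otimes> l)" by blast
    then have "h \<otimes> x \<otimes> (inv x \<otimes> l) = h \<otimes> l"
      using carr by (simp add: m_assoc[symmetric]) (simp add: m_assoc)
    with x p show "p \<in> {p \<in> H \<times> L. fst p \<otimes> snd p = h \<otimes> l}"
      using assms by (simp add: subgroup.m_closed subgroup.m_inv_closed)
  qed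
  moreover have "inj_on (\<lambda>x. (h \<otimes> x, inv x \<otimes> l)) (H \<inter> L)"
    using carr by (auto intro: inj_onI)
  ultimately show ?thesis by (simp add: card_image)
qed

lemma card_set_mult_subgroups:
  assumes "finite (carrier G)" and H: "subgroup H G" and L: "subgroup L G"
  shows "card (H <#> L) * card (H \<inter> L) = card H * card L"
proof -
  let ?m = "\<lambda>p. fst p \<otimes> snd p"
  have HG: "H \<subseteq> carrier G" and LG: "L \<subseteq> carrier G"
    using H L subgroup.subset by blast+
  have "finite H" "finite L" "finite (H <#> L)"
    using finite_subset[OF HG assms(1)] finite_subset[OF LG assms(1)]
      finite_subset[OF set_mult_closed[OF HG LG] assms(1)] .
  then have "card H * card L = (\<Sum>p\<in>H \<times> L. 1)"
    by (simp add: card_cartesian_product)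
  also have "\<dots> = (\<Sum>y\<in>H <#> L. \<Sum>p\<in>{p \<in> H \<times> L. ?m p = y}. 1)"
    using \<open>finite H\<close> \<open>finite L\<close> \<open>finite (H <#> L)\<close>
    by (intro sum.group[symmetric]) (auto simp: set_mult_def intro!: bexI)
  also have "\<dots> = (\<Sum>y\<in>H <#> L. card {p \<in> H \<times> L. ?m p = y})"
    by simp
  also have "\<dots> = (\<Sum>y\<in>H <#> L. card (H \<inter> L))"
  proof (rule sum.cong[OF refl])
    fix y assume "y \<in> H <#> L"
    then obtain h l where "h \<in> H" "l \<in> L" "y = h \<otimes> l"
      unfolding set_mult_def by blast
    then show "card {p \<in> H \<times> L. ?m p = y} = card (H \<inter> L)"
      using card_set_mult_fibre[OF H L] by simp
  qed
  finally show ?thesis by simp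
qed

lemma card_double_coset:
  assumes "finite (carrier G)" and H: "subgroup H G" and K: "subgroup K G" and g: "g \<in> carrier G"
  shows "card ((H #> g) <#> K) * card (H \<inter> (g <# K #> inv g)) = card H * card K"
proof -
  let ?L = "g <# K #> inv g"
  have HG: "H \<subseteq> carrier G" and KG: "K \<subseteq> carrier G"
    using H K subgroup.subset by blast+
  have L: "subgroup ?L G"
    using subgroup_conjugation_is_surj2[OF g K] .
  have LG: "?L \<subseteq> carrier G"
    using L subgroup.subset by blast
  have "(H #> g) <#> K = H <#> (g <# K)"
    using HG KG g by (simp add: rcos_assoc_lcos)
  also have "g <# K = ?L #> g"
    using g KG by (simp add: coset_mult_assoc l_coset_subset_G)
  also have "H <#> (?L #> g) = (H <#> ?L) #> g"
    using HG LG g by (simp add: setmult_rcos_assoc)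
  finally have "card ((H #> g) <#> K) = card (H <#> ?L)"
    using card_r_coset[OF set_mult_closed[OF HG LG] g] by simp
  moreover have "card ?L = card K"
    using card_r_coset[OF l_coset_subset_G[OF KG g] inv_closed[OF g]] card_l_coset[OF KG g]
    by simp
  ultimately show ?thesis
    using card_set_mult_subgroups[OF assms(1) H L] by simp
qed

lemma double_coset_self:
  assumes H: "subgroup H G" and K: "subgroup K G" and g: "g \<in> carrier G"
  shows "g \<in> (H #> g) <#> K"
proof -
  have "g \<otimes> \<one> \<in> (H #> g) <#> K"
    using rcos_self[OF g H] subgroup.one_closed[OF K] unfolding set_mult_def by blast
  then show ?thesis
    using g by simp
qed

lemma double_coset_repr_independence:
  assumes H: "subgroup H G" and K: "subgroup K G" and g: "g \<in> carrier G"
    and y: "y \<in> (H #> g) <#> K"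
  shows "(H #> y) <#> K = (H #> g) <#> K"
proof -
  obtain h k where hk: "h \<in> H" "k \<in> K" and y_eq: "y = h \<otimes> g \<otimes> k"
    using y unfolding set_mult_def r_coset_def by blast
  have HG: "H \<subseteq> carrier G" and KG: "K \<subseteq> carrier G"
    using H K subgroup.subset by blast+
  have hG: "h \<in> carrier G" and kG: "k \<in> carrier G"
    using hk HG KG by blast+
  have "H #> y = ((H #> h) #> g) #> k"
    unfolding y_eq using HG hG g kG by (simp add: coset_mult_assoc)
  also have "H #> h = H"
    using subgroup.rcos_const[OF H is_group hk(1)] .
  finally have "(H #> y) <#> K = (H #> g) <#> (k <# K)"
    using HG KG g kG by (simp add: rcos_assoc_lcos r_coset_subset_G)
  also have "k <# K = K"
    using coset_join3[OF kG K hk(2)] .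
  finally show ?thesis .
qed

lemma inverse_card_double_coset:
  assumes fin: "finite (carrier G)" and H: "subgroup H G" and K: "subgroup K G" and "g \<in> carrier G"
  shows "1 / real (card ((H #> g) <#> K)) =
    real (card (H \<inter> (g <# K #> inv g))) / (real (card H) * real (card K))"
proof -
  have prod: "card ((H #> g) <#> K) * card (H \<inter> (g <# K #> inv g)) = card H * card K"
    using card_double_coset[OF assms] .
  moreover have "card H * card K > 0"
    using subgroup.finite_imp_card_positive[OF H fin] subgroup.finite_imp_card_positive[OF K fin]
    by simp
  ultimately have "card ((H #> g) <#> K) \<noteq> 0" "card (H \<inter> (g <# K #> inv g)) \<noteq> 0"
    by (metis mult_0 mult_0_right less_irrefl)+
  then show ?thesis
    unfolding of_nat_mult[symmetric] prod[symmetric] by simp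
qed

lemma card_double_cosets_eq_sum:
  assumes fin: "finite (carrier G)" and H: "subgroup H G" and K: "subgroup K G"
  shows "real (card (double_cosets G H K)) = (\<Sum>g\<in>carrier G. 1 / real (card ((H #> g) <#> K)))"
proof -
  have HG: "H \<subseteq> carrier G" and KG: "K \<subseteq> carrier G"
    using H K subgroup.subset by blast+
  have "double_cosets G H K = (\<lambda>g. (H #> g) <#> K) ` carrier G"
    by (simp add: double_cosets_def Setcompr_eq_image)
  also have "real (card \<dots>) = (\<Sum>g\<in>carrier G. 1 / real (card ((H #> g) <#> K)))"
  proof (rule card_image_eq_sum_inverse_card[OF fin])
    show "\<And>g. g \<in> carrier G \<Longrightarrow> g \<in> (H #> g) <#> K"
      by (rule double_coset_self[OF H K])
    show "\<And>g. g \<in> carrier G \<Longrightarrow> (H #> g) <#> K \<subseteq> carrier G"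
      by (rule setmult_subset_G[OF r_coset_subset_G[OF HG] KG])
    show "\<And>g y. g \<in> carrier G \<Longrightarrow> y \<in> (H #> g) <#> K \<Longrightarrow> (H #> y) <#> K = (H #> g) <#> K"
      by (rule double_coset_repr_independence[OF H K])
  qed
  finally show ?thesis .
qed

lemma conj_mult_normalizer:
  assumes K: "K \<subseteq> carrier G" and g: "g \<in> carrier G" and n: "n \<in> normalizer G K"
  shows "(g \<otimes> n) <# K #> inv (g \<otimes> n) = g <# K #> inv g"
proof -
  have nG: "n \<in> carrier G" and conj_n: "n <# K #> inv n = K"
    using n K unfolding normalizer_def stabilizer_def by auto
  have "(g \<otimes> n) <# K #> inv (g \<otimes> n) = g <# (n <# K) #> inv n #> inv g"
    using K g nG by (simp add: lcos_m_assoc inv_mult_group coset_mult_assoc l_coset_subset_G)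
  also have "\<dots> = g <# (n <# K #> inv n) #> inv g"
    using K g nG by (simp add: coset_assoc l_coset_subset_G)
  finally show ?thesis
    unfolding conj_n .
qed

lemma sum_carrier_left_transversal:
  fixes f :: "'a \<Rightarrow> 'c::comm_semiring_1"
  assumes fin: "finite (carrier G)" and N: "subgroup N G" and \<Omega>: "left_transversal G N \<Omega>"
    and f: "\<And>g n. g \<in> carrier G \<Longrightarrow> n \<in> N \<Longrightarrow> f (g \<otimes> n) = f g"
  shows "(\<Sum>g\<in>carrier G. f g) = of_nat (card N) * (\<Sum>l\<in>\<Omega>. f l)"
proof -
  have \<Omega>_sub: "\<Omega> \<subseteq> carrier G"
    and uniq: "\<And>g. g \<in> carrier G \<Longrightarrow> \<exists>!l \<in> \<Omega>. l <# N = g <# N"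
    using \<Omega> unfolding left_transversal_def by blast+
  then have \<Omega>G: "\<And>l. l \<in> \<Omega> \<Longrightarrow> l \<in> carrier G"
    by blast
  have NG: "N \<subseteq> carrier G"
    using N subgroup.subset by blast
  have cover: "carrier G = (\<Union>l\<in>\<Omega>. l <# N)"
  proof (intro equalityI subsetI)
    fix g assume "g \<in> carrier G"
    then obtain l where "l \<in> \<Omega>" "l <# N = g <# N"
      using uniq by blast
    then show "g \<in> (\<Union>l\<in>\<Omega>. l <# N)"
      using lcos_self[OF \<open>g \<in> carrier G\<close> N] by auto
  next
    fix g assume "g \<in> (\<Union>l\<in>\<Omega>. l <# N)"
    then obtain l where "l \<in> \<Omega>" "g \<in> l <# N" by blast
    then show "g \<in> carrier G"
      using l_coset_carrier[OF _ \<Omega>G N] by blast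
  qed
  have disjoint: "(l <# N) \<inter> (l' <# N) = {}" if "l \<in> \<Omega>" "l' \<in> \<Omega>" "l \<noteq> l'" for l l'
  proof (rule ccontr)
    assume "(l <# N) \<inter> (l' <# N) \<noteq> {}"
    then obtain x where x: "x \<in> l <# N" "x \<in> l' <# N" by blast
    have "x \<in> carrier G"
      using l_coset_carrier[OF x(1) \<Omega>G[OF that(1)] N] .
    moreover have "l <# N = x <# N" "l' <# N = x <# N"
      using l_repr_independence[OF x(1) \<Omega>G[OF that(1)] N]
        l_repr_independence[OF x(2) \<Omega>G[OF that(2)] N] .
    ultimately show False
      using uniq that by blast
  qed
  have coset_sum: "(\<Sum>g\<in>l <# N. f g) = of_nat (card N) * f l" if "l \<in> \<Omega>" for l
  proof -
    have "(\<Sum>g\<in>l <# N. f g) = (\<Sum>g\<in>l <# N. f l)"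
    proof (rule sum.cong[OF refl])
      fix g assume "g \<in> l <# N"
      then obtain n where "n \<in> N" "g = l \<otimes> n"
        unfolding l_coset_def by blast
      then show "f g = f l"
        using f \<Omega>G[OF that] by simp
    qed
    then show ?thesis
      using card_l_coset[OF NG \<Omega>G[OF that]] by simp
  qed
  have "finite \<Omega>"
    using finite_subset[OF \<Omega>_sub fin] .
  moreover have "\<forall>l\<in>\<Omega>. finite (l <# N)"
    using finite_subset[OF l_coset_subset_G[OF NG \<Omega>G] fin] by blast
  ultimately have "(\<Sum>g\<in>carrier G. f g) = (\<Sum>l\<in>\<Omega>. \<Sum>g\<in>l <# N. f g)"
    unfolding cover using disjoint by (intro sum.UNION_disjoint) blast+
  also have "\<dots> = of_nat (card N) * (\<Sum>l\<in>\<Omega>. f l)"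
    by (simp add: coset_sum sum_distrib_left)
  finally show ?thesis .
qed

end

theorem lemma3p3:
  fixes G (structure) and H K \<Omega> :: "'a set"
  assumes "group G" and "finite (carrier G)"
    and "subgroup H G" and "subgroup K G"
    and "left_transversal G (normalizer G K) \<Omega>"
  shows "real (card (double_cosets G H K)) =
    (\<Sum>l\<in>\<Omega>. (real (card (normalizer G K)) / real (card K)) *
              real (card ((l <# K #> inv l) \<inter> H)) / real (card H))"
proof -
  interpret group G by fact
  note fin = assms(2) and H = assms(3) and K = assms(4)
  let ?c = "\<lambda>g. real (card ((g <# K #> inv g) \<inter> H))"
  have KG: "K \<subseteq> carrier G"
    using K subgroup.subset by blast
  have "real (card (double_cosets G H K)) =
      (\<Sum>g\<in>carrier G. ?c g / (real (card H) * real (card K)))"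
    by (simp add: card_double_cosets_eq_sum[OF fin H K] inverse_card_double_coset[OF fin H K]
        Int_commute)
  also have "\<dots> = real (card (normalizer G K)) * (\<Sum>l\<in>\<Omega>. ?c l / (real (card H) * real (card K)))"
    by (rule sum_carrier_left_transversal[OF fin normalizer_imp_subgroup[OF KG] assms(5)])
      (simp add: conj_mult_normalizer KG)
  finally show ?thesis
    by (simp add: sum_distrib_left field_simps)
qed

end
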